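(* Let $\lambda>0$ and $\mu_R,\mu_L,\mu_U>0$. The Markov jump process on $\mathbb{N}^3$, with coordinates $x=(x_R,x_L,x_U)$ and transitions $x\to x+e_R+e_U-e_L$ at rate $\mu_Lx_L$, $x\to x-e_R$ at rate $\mu_Rx_R$, $x\to x-e_U$ at rate $\mu_Ux_U$, and $x\to x+e_L$ at rate $\lambda$, has as invariant distribution the law of $(X+Y_1,Z,X+Y_2)$, where $X,Y_1,Y_2,Z$ are independent Poisson random variables with respective parameters $$\frac{\lambda}{\mu_R+\mu_U},\quad \frac{\lambda\mu_U}{\mu_R(\mu_R+\mu_U)},\quad\frac{\lambda\mu_R}{\mu_U(\mu_R+\mu_U)},\quad\frac{\lambda}{\mu_L}.$$
   Context: $e_R,e_L,e_U$ denote the unit vectors of $\mathbb{N}^3$ for the three coordinates. *)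

theory Defs
  imports "HOL-Probability.Probability"
begin

type_synonym state = "nat \<times> nat \<times> nat"  (* (x_R, x_L, x_U) *)

definition rate3 :: "real \<Rightarrow> real \<Rightarrow> real \<Rightarrow> real \<Rightarrow> state \<Rightarrow> state \<Rightarrow> real" where
  "rate3 lam muR muL muU x y =
     (case x of (xR, xL, xU) \<Rightarrow>
        (if xL \<ge> 1 \<and> y = (xR + 1, xL - 1, xU + 1) then muL * real xL else 0)
      + (if xR \<ge> 1 \<and> y = (xR - 1, xL, xU) then muR * real xR else 0)
      + (if xU \<ge> 1 \<and> y = (xR, xL, xU - 1) then muU * real xU else 0)
      + (if y = (xR, xL + 1, xU) then lam else 0))"

text \<open>A probability distribution p is invariant for the jump process with rates q
  if it satisfies the global balance equations p Q = 0.\<close>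
definition invariant_pmf :: "('s \<Rightarrow> 's \<Rightarrow> real) \<Rightarrow> 's pmf \<Rightarrow> bool" where
  "invariant_pmf q p \<longleftrightarrow>
     (\<forall>y. (\<Sum>\<^sub>\<infinity>x\<in>-{y}. pmf p x * q x y) = pmf p y * (\<Sum>\<^sub>\<infinity>z\<in>-{y}. q y z))"

end

theory Submission
  imports Defs
begin

(* The law factorises as the Poisson(lam/muL) weight of x_L times the law g of (X + Y1, X + Y2).
   Poisson weights satisfy k pi_c(k) = c pi_c(k - 1); this settles the x_L-part of global balance,
   and applied to both x and r - x in g(r, u) = sum_x pi_a(x) pi_b1(r - x) pi_b2(u - x) it gives
   r g(r, u) = a g(r - 1, u - 1) + b1 g(r - 1, u) and the mirror identity for u.  Balance then
   reduces to linear relations between shifted values of g, which hold because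
   lam = (muR + muU) a, muR a = muU b2 and muU a = muR b1. *)

definition poisson_int :: "real \<Rightarrow> int \<Rightarrow> real" where
  "poisson_int c k = (if 0 \<le> k then c ^ nat k / fact (nat k) * exp (- c) else 0)"

lemma poisson_int_neg: "k < 0 \<Longrightarrow> poisson_int c k = 0"
  by (simp add: poisson_int_def)

lemma pmf_poisson_eq_poisson_int: "0 < c \<Longrightarrow> pmf (poisson_pmf c) n = poisson_int c (int n)"
  by (simp add: poisson_int_def)

lemma poisson_int_shift: "of_int k * poisson_int c k = c * poisson_int c (k - 1)"
proof (cases "k \<ge> 1")
  case True
  define n where "n = nat (k - 1)"
  have k: "k = int (Suc n)"
    using True by (simp add: n_def)
  have "poisson_int c k = c ^ Suc n / fact (Suc n) * exp (- c)"
    unfolding k poisson_int_def nat_int by simp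
  moreover have "poisson_int c (k - 1) = c ^ n / fact n * exp (- c)"
    unfolding k poisson_int_def by simp
  moreover have "real (Suc n) * (c ^ Suc n / fact (Suc n)) = c * (c ^ n / fact n)"
    by (simp add: fact_Suc del: of_nat_Suc)
  ultimately show ?thesis
    unfolding k of_int_of_nat_eq by (metis mult.assoc)
next
  case False
  then show ?thesis by (cases "k = 0") (auto simp: poisson_int_def)
qed

definition bivariate_poisson :: "real \<Rightarrow> real \<Rightarrow> real \<Rightarrow> int \<Rightarrow> int \<Rightarrow> real" where
  "bivariate_poisson a b1 b2 i j =
     (\<Sum>x\<in>{0..min i j}. poisson_int a x * poisson_int b1 (i - x) * poisson_int b2 (j - x))"

lemma bivariate_poisson_eq_sum_superset:
  assumes "finite W" "{0..min i j} \<subseteq> W"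
  shows "bivariate_poisson a b1 b2 i j =
           (\<Sum>x\<in>W. poisson_int a x * poisson_int b1 (i - x) * poisson_int b2 (j - x))"
  unfolding bivariate_poisson_def
proof (rule sum.mono_neutral_left)
  show "\<forall>x\<in>W - {0..min i j}. poisson_int a x * poisson_int b1 (i - x) * poisson_int b2 (j - x) = 0"
  proof
    fix x assume "x \<in> W - {0..min i j}"
    then have "x < 0 \<or> i - x < 0 \<or> j - x < 0" by auto
    then show "poisson_int a x * poisson_int b1 (i - x) * poisson_int b2 (j - x) = 0"
      by (auto simp: poisson_int_neg)
  qed
qed (use assms in auto)

lemma bivariate_poisson_neg: "i < 0 \<or> j < 0 \<Longrightarrow> bivariate_poisson a b1 b2 i j = 0"
  by (auto simp: bivariate_poisson_def)

lemma bivariate_poisson_commute: "bivariate_poisson a b1 b2 i j = bivariate_poisson a b2 b1 j i"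
  by (simp add: bivariate_poisson_def min.commute mult_ac)

lemma bivariate_poisson_mult_fst:
  "of_int i * bivariate_poisson a b1 b2 i j =
     a * bivariate_poisson a b1 b2 (i - 1) (j - 1) + b1 * bivariate_poisson a b1 b2 (i - 1) j"
proof -
  define t where "t x y1 y2 = poisson_int a x * poisson_int b1 y1 * poisson_int b2 y2" for x y1 y2
  have "bivariate_poisson a b1 b2 i j = (\<Sum>x\<in>{0..i}. t x (i - x) (j - x))"
    unfolding t_def by (rule bivariate_poisson_eq_sum_superset) auto
  then have "of_int i * bivariate_poisson a b1 b2 i j = (\<Sum>x\<in>{0..i}. of_int i * t x (i - x) (j - x))"
    by (simp add: sum_distrib_left)
  also have "\<dots> = (\<Sum>x\<in>{0..i}. of_int x * t x (i - x) (j - x))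
                  + (\<Sum>x\<in>{0..i}. of_int (i - x) * t x (i - x) (j - x))"
    by (simp add: ring_distribs flip: sum.distrib)
  finally have split: "of_int i * bivariate_poisson a b1 b2 i j = \<dots>" .
  have "(\<Sum>x\<in>{0..i}. of_int x * t x (i - x) (j - x))
        = a * (\<Sum>x\<in>{0..i}. t (x - 1) (i - x) (j - x))"
    unfolding sum_distrib_left t_def
    by (intro sum.cong refl) (simp add: poisson_int_shift flip: mult.assoc)
  also have "(\<Sum>x\<in>{0..i}. t (x - 1) (i - x) (j - x))
             = (\<Sum>x\<in>{-1..i - 1}. t x (i - 1 - x) (j - 1 - x))"
    by (rule sum.reindex_bij_witness[of _ "\<lambda>x. x + 1" "\<lambda>x. x - 1"]) auto
  also have "\<dots> = bivariate_poisson a b1 b2 (i - 1) (j - 1)"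
    unfolding t_def by (rule bivariate_poisson_eq_sum_superset[symmetric]) auto
  finally have common: "(\<Sum>x\<in>{0..i}. of_int x * t x (i - x) (j - x))
                        = a * bivariate_poisson a b1 b2 (i - 1) (j - 1)" .
  have "of_int (i - x) * t x (i - x) (j - x) = b1 * t x (i - 1 - x) (j - x)" for x
  proof -
    have "of_int (i - x) * t x (i - x) (j - x)
          = poisson_int a x * (of_int (i - x) * poisson_int b1 (i - x)) * poisson_int b2 (j - x)"
      unfolding t_def by (simp only: mult_ac)
    also have "of_int (i - x) * poisson_int b1 (i - x) = b1 * poisson_int b1 (i - 1 - x)"
      using poisson_int_shift[of "i - x" b1] by (simp add: diff_diff_eq add.commute)
    finally show ?thesis
      unfolding t_def by (simp only: mult_ac)
  qed
  then have "(\<Sum>x\<in>{0..i}. of_int (i - x) * t x (i - x) (j - x))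
             = b1 * (\<Sum>x\<in>{0..i}. t x (i - 1 - x) (j - x))"
    by (simp add: sum_distrib_left)
  also have "(\<Sum>x\<in>{0..i}. t x (i - 1 - x) (j - x)) = bivariate_poisson a b1 b2 (i - 1) j"
    unfolding t_def by (rule bivariate_poisson_eq_sum_superset[symmetric]) auto
  finally have own: "(\<Sum>x\<in>{0..i}. of_int (i - x) * t x (i - x) (j - x))
                     = b1 * bivariate_poisson a b1 b2 (i - 1) j" .
  show ?thesis
    unfolding split common own ..
qed

lemma bivariate_poisson_mult_snd:
  "of_int j * bivariate_poisson a b1 b2 i j =
     a * bivariate_poisson a b1 b2 (i - 1) (j - 1) + b2 * bivariate_poisson a b1 b2 i (j - 1)"
  using bivariate_poisson_mult_fst[of j a b2 b1 i] unfolding bivariate_poisson_commute[of a b2 b1] .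

lemma bivariate_poisson_balance:
  fixes lam muR muU :: real
  assumes "lam = (muR + muU) * a" "muR * a = muU * b2" "muU * a = muR * b1"
  shows "lam * bivariate_poisson a b1 b2 (i - 1) (j - 1)
         + muR * (of_int i + 1) * bivariate_poisson a b1 b2 (i + 1) j
         + muU * (of_int j + 1) * bivariate_poisson a b1 b2 i (j + 1)
       = (muR * of_int i + muU * of_int j + lam) * bivariate_poisson a b1 b2 i j"
proof -
  have up_fst: "(of_int i + 1) * bivariate_poisson a b1 b2 (i + 1) j =
      a * bivariate_poisson a b1 b2 i (j - 1) + b1 * bivariate_poisson a b1 b2 i j"
    using bivariate_poisson_mult_fst[of "i + 1" a b1 b2 j] by simp
  have up_snd: "(of_int j + 1) * bivariate_poisson a b1 b2 i (j + 1) =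
      a * bivariate_poisson a b1 b2 (i - 1) j + b2 * bivariate_poisson a b1 b2 i j"
    using bivariate_poisson_mult_snd[of "j + 1" a b1 b2 i] by simp
  show ?thesis
    using up_fst up_snd bivariate_poisson_mult_fst[of i a b1 b2 j]
      bivariate_poisson_mult_snd[of j a b1 b2 i] assms
    by algebra
qed

lemma pmf_common_shock_poisson:
  assumes "0 < a" "0 < b1" "0 < b2" "0 < c"
  shows "pmf (map_pmf (\<lambda>(x, y1, y2, z). (x + y1, z, x + y2))
           (pair_pmf (poisson_pmf a) (pair_pmf (poisson_pmf b1) (pair_pmf (poisson_pmf b2) (poisson_pmf c)))))
           (r, l, u)
         = poisson_int c (int l) * bivariate_poisson a b1 b2 (int r) (int u)"
proof -
  have fibre: "(\<lambda>(x, y1, y2, z). (x + y1, z, x + y2)) -` {(r, l, u)}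
               = (\<lambda>x. (x, r - x, u - x, l)) ` {0..min r u}"
    by (auto simp: image_iff)
  have "inj_on (\<lambda>x. (x, r - x, u - x, l)) {0..min r u}"
    by (auto simp: inj_on_def)
  then have "pmf (map_pmf (\<lambda>(x, y1, y2, z). (x + y1, z, x + y2))
           (pair_pmf (poisson_pmf a) (pair_pmf (poisson_pmf b1) (pair_pmf (poisson_pmf b2) (poisson_pmf c)))))
           (r, l, u)
      = (\<Sum>x\<in>{0..min r u}. pmf (poisson_pmf a) x * (pmf (poisson_pmf b1) (r - x)
                              * (pmf (poisson_pmf b2) (u - x) * pmf (poisson_pmf c) l)))"
    unfolding pmf_map fibre by (simp add: measure_measure_pmf_finite sum.reindex pmf_pair)
  also have "\<dots> = (\<Sum>x\<in>{0..min r u}. poisson_int c (int l) * (poisson_int a (int x)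
                     * poisson_int b1 (int r - int x) * poisson_int b2 (int u - int x)))"
  proof (rule sum.cong[OF refl])
    fix x assume "x \<in> {0..min r u}"
    then have "int r - int x = int (r - x)" "int u - int x = int (u - x)"
      by auto
    then show "pmf (poisson_pmf a) x * (pmf (poisson_pmf b1) (r - x)
                 * (pmf (poisson_pmf b2) (u - x) * pmf (poisson_pmf c) l))
        = poisson_int c (int l) * (poisson_int a (int x)
                 * poisson_int b1 (int r - int x) * poisson_int b2 (int u - int x))"
      by (simp only: pmf_poisson_eq_poisson_int assms mult_ac)
  qed
  also have "\<dots> = (\<Sum>x\<in>int ` {0..min r u}. poisson_int c (int l)
                     * (poisson_int a x * poisson_int b1 (int r - x) * poisson_int b2 (int u - x)))"
    by (simp add: sum.reindex)
  also have "\<dots> = poisson_int c (int l) * bivariate_poisson a b1 b2 (int r) (int u)"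
    by (simp add: bivariate_poisson_def image_int_atLeastAtMost sum_distrib_left)
  finally show ?thesis .
qed

lemma has_sum_if_eq: "c \<in> A \<Longrightarrow> ((\<lambda>x. if x = c then v else 0) has_sum v) A"
  by (rule has_sum_finite_neutralI[of "{c}"]) auto

lemma has_sum_if_conj_eq:
  "(Q \<Longrightarrow> c \<in> A) \<Longrightarrow> ((\<lambda>x. if Q \<and> x = c then v else 0) has_sum (if Q then v else 0)) A"
  by (rule has_sum_finite_neutralI[of "if Q then {c} else {}"]) auto

lemma infsum_rate3_from:
  "(\<Sum>\<^sub>\<infinity>z\<in>-{(r, l, u)}. rate3 lam muR muL muU (r, l, u) z)
     = muL * real l + muR * real r + muU * real u + lam"
proof -
  have "((\<lambda>z. rate3 lam muR muL muU (r, l, u) z) has_sum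
          ((if 1 \<le> l then muL * real l else 0) + (if 1 \<le> r then muR * real r else 0)
           + (if 1 \<le> u then muU * real u else 0) + lam)) (-{(r, l, u)})"
    unfolding rate3_def prod.case by (intro has_sum_add has_sum_if_conj_eq has_sum_if_eq) auto
  then show ?thesis
    by (simp add: infsumI not_less_eq_eq)
qed

lemma mult_rate3_into:
  "f x * rate3 lam muR muL muU x (r, l, u) =
       (if (1 \<le> r \<and> 1 \<le> u) \<and> x = (r - 1, l + 1, u - 1)
        then f (r - 1, l + 1, u - 1) * (muL * (real l + 1)) else 0)
     + (if x = (r + 1, l, u) then f (r + 1, l, u) * (muR * (real r + 1)) else 0)
     + (if x = (r, l, u + 1) then f (r, l, u + 1) * (muU * (real u + 1)) else 0)
     + (if 1 \<le> l \<and> x = (r, l - 1, u) then f (r, l - 1, u) * lam else 0)"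
  by (cases x) (auto simp: rate3_def ring_distribs)

lemma infsum_rate3_into:
  "(\<Sum>\<^sub>\<infinity>x\<in>-{(r, l, u)}. f x * rate3 lam muR muL muU x (r, l, u)) =
       (if 1 \<le> r \<and> 1 \<le> u then f (r - 1, l + 1, u - 1) * (muL * (real l + 1)) else 0)
     + f (r + 1, l, u) * (muR * (real r + 1)) + f (r, l, u + 1) * (muU * (real u + 1))
     + (if 1 \<le> l then f (r, l - 1, u) * lam else 0)"
proof -
  have "((\<lambda>x. f x * rate3 lam muR muL muU x (r, l, u)) has_sum
       ((if 1 \<le> r \<and> 1 \<le> u then f (r - 1, l + 1, u - 1) * (muL * (real l + 1)) else 0)
     + f (r + 1, l, u) * (muR * (real r + 1)) + f (r, l, u + 1) * (muU * (real u + 1))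
     + (if 1 \<le> l then f (r, l - 1, u) * lam else 0))) (-{(r, l, u)})"
    unfolding mult_rate3_into by (intro has_sum_add has_sum_if_conj_eq has_sum_if_eq) auto
  then show ?thesis
    by (rule infsumI)
qed

(* Extending p by zero to integer states removes the boundary cases from the balance equations. *)
lemma invariant_pmf_rate3I:
  fixes F :: "int \<Rightarrow> int \<Rightarrow> int \<Rightarrow> real"
  assumes pmf_eq: "\<And>r l u. pmf p (r, l, u) = F (int r) (int l) (int u)"
    and F_neg: "\<And>r l u. r < 0 \<or> l < 0 \<or> u < 0 \<Longrightarrow> F r l u = 0"
    and balance: "\<And>r l u. 0 \<le> r \<Longrightarrow> 0 \<le> l \<Longrightarrow> 0 \<le> u \<Longrightarrow>
        muL * (of_int l + 1) * F (r - 1) (l + 1) (u - 1) + muR * (of_int r + 1) * F (r + 1) l u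
        + muU * (of_int u + 1) * F r l (u + 1) + lam * F r (l - 1) u
      = (muL * of_int l + muR * of_int r + muU * of_int u + lam) * F r l u"
  shows "invariant_pmf (rate3 lam muR muL muU) p"
  unfolding invariant_pmf_def
proof
  fix y :: state
  obtain r l u where y: "y = (r, l, u)"
    by (cases y) auto
  have in_L: "(if 1 \<le> r \<and> 1 \<le> u then pmf p (r - 1, l + 1, u - 1) * (muL * (real l + 1)) else 0)
      = muL * (of_int (int l) + 1) * F (int r - 1) (int l + 1) (int u - 1)"
    by (cases "1 \<le> r \<and> 1 \<le> u") (auto simp: pmf_eq of_nat_diff F_neg add.commute)
  have in_lam: "(if 1 \<le> l then pmf p (r, l - 1, u) * lam else 0)
      = lam * F (int r) (int l - 1) (int u)"
    by (cases "1 \<le> l") (auto simp: pmf_eq of_nat_diff F_neg)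
  show "(\<Sum>\<^sub>\<infinity>x\<in>-{y}. pmf p x * rate3 lam muR muL muU x y)
      = pmf p y * (\<Sum>\<^sub>\<infinity>z\<in>-{y}. rate3 lam muR muL muU y z)"
    using balance[of "int r" "int l" "int u"]
    unfolding y infsum_rate3_into infsum_rate3_from in_L in_lam
    by (simp add: pmf_eq add_ac mult_ac)
qed

theorem mainTheorem4:
  fixes lam muR muL muU :: real
  assumes "lam > 0" "muR > 0" "muL > 0" "muU > 0"
  shows "invariant_pmf (rate3 lam muR muL muU)
     (map_pmf (\<lambda>(x, y1, y2, z). (x + y1, z, x + y2))
        (pair_pmf (poisson_pmf (lam / (muR + muU)))
          (pair_pmf (poisson_pmf (lam * muU / (muR * (muR + muU))))
            (pair_pmf (poisson_pmf (lam * muR / (muU * (muR + muU))))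
              (poisson_pmf (lam / muL))))))"
proof -
  define a where "a = lam / (muR + muU)"
  define b1 where "b1 = lam * muU / (muR * (muR + muU))"
  define b2 where "b2 = lam * muR / (muU * (muR + muU))"
  define c where "c = lam / muL"
  have pos: "0 < a" "0 < b1" "0 < b2" "0 < c"
    using assms by (simp_all add: a_def b1_def b2_def c_def)
  have rel: "lam = (muR + muU) * a" "muR * a = muU * b2" "muU * a = muR * b1" "lam = muL * c"
    using assms by (simp_all add: a_def b1_def b2_def c_def divide_simps)
  show ?thesis
    unfolding a_def[symmetric] b1_def[symmetric] b2_def[symmetric] c_def[symmetric]
  proof (rule invariant_pmf_rate3I[where F = "\<lambda>r l u. poisson_int c l * bivariate_poisson a b1 b2 r u"],
         goal_cases)
    case (1 r l u)
    show ?case by (rule pmf_common_shock_poisson[OF pos])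
  next
    case (2 r l u)
    then show ?case by (auto simp: poisson_int_neg bivariate_poisson_neg)
  next
    case (3 r l u)
    show ?case
      using bivariate_poisson_balance[OF rel(1-3), of r u] poisson_int_shift[of "l + 1" c]
        poisson_int_shift[of l c] rel(4)
      by simp algebra
  qed
qed

end
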